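(* Let $n$ and $k$ be even integers with $1\le k<n/2$. If $n\neq 4k$, then $C(n,k)=\langle\rho,\delta,\beta\rangle\cong \mathrm{D}_{2n}\times\mathbb{Z}_2$. If $n=4k$, then $C(n,k)=\langle\rho,\delta,\beta,\theta\rangle$.
   Context: $\mathrm{DGP}(n,k)$ ($1\le k<n/2$) is the graph with vertex set $\{(u_i,j),(v_i,j): 0\le i\le n-1,\ j\in\{0,1\}\}$ and edges $\{(u_i,j),(u_{i+1},1-j)\}$ (outer edges, forming the set $\mathcal{O}$), $\{(u_i,j),(v_i,1-j)\}$ (spokes, the set $\mathcal{S}$), $\{(v_i,j),(v_{i+k},1-j)\}$ (inner edges, the set $\mathcal{I}$), subscripts mod $n$; it is the canonical double cover of the generalized Petersen graph $\mathrm{GP}(n,k)$. Let $A(n,k)$ be its automorphism group and $C(n,k)$ the subgroup stabilizing each of $\mathcal{O},\mathcal{I},\mathcal{S}$ setwise. Define permutations of the vertex set: $(u_i,j)^\rho=(u_{i+1},j)$, $(v_i,j)^\rho=(v_{i+1},j)$; $(u_i,j)^\delta=(u_{-i},j)$, $(v_i,j)^\delta=(v_{-i},j)$; $(u_i,j)^\beta=(u_i,1-j)$, $(v_i,j)^\beta=(v_i,1-j)$. When $n=4k$ with $k$ even, define $\theta$ by: if $i+j$ is odd, $(u_i,j)^\theta=(u_{i+2k},j)$ and $(v_i,j)^\theta=(v_i,j)$; if $i+j$ is even, $(u_i,j)^\theta=(u_i,j)$ and $(v_i,j)^\theta=(v_{i+2k},j)$. $\mathrm{D}_{2n}$ is the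 dihedral group of order $2n$. *)

theory Defs
  imports "HOL-Algebra.Algebra"
begin

text \<open>Vertices of DGP(n,k): (side, i, j) with side U or V, 0 <= i < n, j in {0,1}
  (j encoded as bool: False = 0, True = 1).\<close>

datatype side = U | V

type_synonym vert = "side \<times> nat \<times> bool"

definition verts :: "nat \<Rightarrow> vert set" where
  "verts n = {(s, i, j). i < n}"

definition outer_edges :: "nat \<Rightarrow> vert set set" where
  "outer_edges n = {{(U, i, j), (U, (i + 1) mod n, \<not> j)} | i j. i < n}"

definition spoke_edges :: "nat \<Rightarrow> vert set set" where
  "spoke_edges n = {{(U, i, j), (V, i, \<not> j)} | i j. i < n}"

definition inner_edges :: "nat \<Rightarrow> nat \<Rightarrow> vert set set" where
  "inner_edges n k = {{(V, i, j), (V, (i + k) mod n, \<not> j)} | i j. i < n}"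

abbreviation SymV :: "nat \<Rightarrow> (vert \<Rightarrow> vert) monoid" where
  "SymV n \<equiv> BijGroup (verts n)"

text \<open>C(n,k): permutations of the vertex set stabilizing O, I, S setwise
  (such permutations are automatically automorphisms of DGP(n,k)).\<close>
definition Cnk :: "nat \<Rightarrow> nat \<Rightarrow> (vert \<Rightarrow> vert) set" where
  "Cnk n k = {\<sigma> \<in> carrier (SymV n).
      (\<lambda>e. \<sigma> ` e) ` outer_edges n = outer_edges n \<and>
      (\<lambda>e. \<sigma> ` e) ` inner_edges n k = inner_edges n k \<and>
      (\<lambda>e. \<sigma> ` e) ` spoke_edges n = spoke_edges n}"

definition rho :: "nat \<Rightarrow> vert \<Rightarrow> vert" where
  "rho n = restrict (\<lambda>(s, i, j). (s, (i + 1) mod n, j)) (verts n)"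

definition delta :: "nat \<Rightarrow> vert \<Rightarrow> vert" where
  "delta n = restrict (\<lambda>(s, i, j). (s, (n - i) mod n, j)) (verts n)"

definition beta :: "nat \<Rightarrow> vert \<Rightarrow> vert" where
  "beta n = restrict (\<lambda>(s, i, j). (s, i, \<not> j)) (verts n)"

definition theta :: "nat \<Rightarrow> nat \<Rightarrow> vert \<Rightarrow> vert" where
  "theta n k = restrict (\<lambda>(s, i, j).
      if odd (i + (if j then 1 else 0))
      then (if s = U then (s, (i + 2 * k) mod n, j) else (s, i, j))
      else (if s = U then (s, i, j) else (s, (i + 2 * k) mod n, j))) (verts n)"

text \<open>Dihedral group of order 2n, as the group of symmetries of the n-cycle on {0..<n},
  generated by rotation and reflection.\<close>
definition dihedral :: "nat \<Rightarrow> (nat \<Rightarrow> nat) monoid" where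
  "dihedral n = (BijGroup {..<n}) \<lparr> carrier :=
      generate (BijGroup {..<n})
        {restrict (\<lambda>i. (i + 1) mod n) {..<n}, restrict (\<lambda>i. (n - i) mod n) {..<n}} \<rparr>"

end

theory Submission
  imports Defs
begin

text \<open>
  Outer edges lie on the U-side, so every element of
  C(n,k) maps (u_0,0) to some (u_a,b) and (u_1,1) to an outer neighbour of it; composing with
  the lift of a dihedral map i \<mapsto> a \<plusminus> i of the indices (possibly flipping the layer bit,
  which is what \<beta> does) we may assume both vertices are fixed. Then the whole outer path
  (u_i, i mod 2) is fixed, and through the spokes so are the vertices (v_i, i+1 mod 2). A
  remaining vertex (v_i, i mod 2) is an inner neighbour of the two fixed vertices
  (v_(i\<plusminus>k), i+1 mod 2), so it is fixed or sent to (v_(i+2k), i mod 2), and the latter needs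
  i + 2k \<equiv> i - 2k, i.e. n = 4k. For n \<noteq> 4k everything is therefore fixed, while for n = 4k
  the only other possibility is \<theta>. The lifts of dihedral maps are words in \<rho>, \<delta>, \<beta>, and
  (d, z) \<mapsto> lift of d with layer flip z is an isomorphism from D_2n \<times> Z_2 onto C(n,k).
\<close>

lemma mem_verts [simp]: "(s, i, j) \<in> verts n \<longleftrightarrow> i < n"
  by (simp add: verts_def)

lemma add_mod_bounded:
  fixes a b n :: nat
  assumes "a < n" and "b \<le> n"
  shows "(a + b) mod n = (if a + b < n then a + b else a + b - n)"
  using assms by (simp add: le_mod_geq)

lemma eq_add_mod_iff:
  fixes i i' c n :: nat
  assumes "i < n" and "i' < n" and "c \<le> n"
  shows "i = (i' + c) mod n \<longleftrightarrow> i' = (i + (n - c)) mod n"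
  using add_mod_bounded[of i' n c] add_mod_bounded[of i n "n - c"] assms
  by (auto split: if_splits)

lemma finite_edge_family: "finite {f i j | i (j :: bool). i < (n :: nat)}"
proof -
  have "finite ((\<lambda>(i, j). f i j) ` ({..<n} \<times> (UNIV :: bool set)))"
    by (intro finite_imageI finite_cartesian_product) auto
  moreover have "{f i j | i (j :: bool). i < n} = (\<lambda>(i, j). f i j) ` ({..<n} \<times> UNIV)"
    by auto
  ultimately show ?thesis
    by simp
qed

lemma carrier_BijGroup: "carrier (BijGroup A) = Bij A"
  by (simp add: BijGroup_def)

lemma BijGroup_mult_apply:
  "f \<in> Bij A \<Longrightarrow> g \<in> Bij A \<Longrightarrow> x \<in> A \<Longrightarrow> (f \<otimes>\<^bsub>BijGroup A\<^esub> g) x = f (g x)"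
  by (simp add: BijGroup_def compose_def)

lemma BijGroup_inv_apply:
  "f \<in> Bij A \<Longrightarrow> x \<in> A \<Longrightarrow> (inv\<^bsub>BijGroup A\<^esub> f) (f x) = x"
  by (auto simp: inv_BijGroup Bij_def bij_betw_def Bij_imp_funcset)

lemma BijGroup_inv_mult_apply:
  assumes "g \<in> Bij A" and "f \<in> Bij A" and "x \<in> A" and "g x = f x"
  shows "(inv\<^bsub>BijGroup A\<^esub> g \<otimes>\<^bsub>BijGroup A\<^esub> f) x = x"
proof -
  have "inv\<^bsub>BijGroup A\<^esub> g \<in> Bij A"
    using group.inv_closed[OF group_BijGroup] assms(1) by (simp add: carrier_BijGroup)
  with assms show ?thesis
    using BijGroup_inv_apply[OF assms(1,3)] by (simp add: BijGroup_mult_apply)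
qed

lemma BijGroup_one_eqI:
  assumes "f \<in> Bij A" and "\<And>x. x \<in> A \<Longrightarrow> f x = x"
  shows "f = \<one>\<^bsub>BijGroup A\<^esub>"
  using assms by (auto simp: BijGroup_def Bij_def intro!: extensionalityI)

lemma edge_image_eq_if_maps_into:
  assumes "bij_betw f A A" and "\<And>e. e \<in> E \<Longrightarrow> e \<subseteq> A" and "finite E"
    and "\<And>e. e \<in> E \<Longrightarrow> f ` e \<in> E"
  shows "(\<lambda>e. f ` e) ` E = E"
proof -
  have "inj_on (\<lambda>e. f ` e) E"
    using assms(1,2) inj_on_image_eq_iff[of f A] by (auto simp: bij_betw_def inj_on_def)
  then have "card ((\<lambda>e. f ` e) ` E) = card E"
    by (rule card_image)
  with assms(3,4) show ?thesis
    by (simp add: card_subset_eq image_subsetI)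
qed

lemma doubleton_image_mem_iff:
  assumes "inj_on f A" and "\<And>e. e \<in> E \<Longrightarrow> e \<subseteq> A" and "(\<lambda>e. f ` e) ` E = E"
    and "x \<in> A" and "y \<in> A"
  shows "{f x, f y} \<in> E \<longleftrightarrow> {x, y} \<in> E"
proof
  assume "{x, y} \<in> E"
  then have "f ` {x, y} \<in> (\<lambda>e. f ` e) ` E"
    by (rule imageI)
  with assms(3) show "{f x, f y} \<in> E"
    by simp
next
  assume "{f x, f y} \<in> E"
  with assms(3) obtain e where e: "e \<in> E" "f ` {x, y} = f ` e"
    by (metis (no_types, lifting) image_empty image_iff image_insert)
  with assms have "{x, y} = e"
    using inj_on_image_eq_iff[OF assms(1)] by (metis empty_subsetI insert_subset)
  with e show "{x, y} \<in> E"
    by simp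
qed

lemma subgroup_edge_stabilizer:
  assumes "\<And>e. e \<in> E \<Longrightarrow> e \<subseteq> A"
  shows "subgroup {f \<in> carrier (BijGroup A). (\<lambda>e. f ` e) ` E = E} (BijGroup A)"
proof (rule group.subgroupI[OF group_BijGroup])
  show "{f \<in> carrier (BijGroup A). (\<lambda>e. f ` e) ` E = E} \<subseteq> carrier (BijGroup A)"
    by blast
  have "(\<lambda>x\<in>A. x) ` e = e" if "e \<in> E" for e
    using assms[OF that] by auto
  then have "(\<lambda>e. (\<lambda>x\<in>A. x) ` e) ` E = E"
    by simp
  then have "(\<lambda>x\<in>A. x) \<in> {f \<in> carrier (BijGroup A). (\<lambda>e. f ` e) ` E = E}"
    using id_Bij by (simp add: BijGroup_def)
  then show "{f \<in> carrier (BijGroup A). (\<lambda>e. f ` e) ` E = E} \<noteq> {}"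
    by blast
next
  fix f assume "f \<in> {f \<in> carrier (BijGroup A). (\<lambda>e. f ` e) ` E = E}"
  then have f: "f \<in> Bij A" "(\<lambda>e. f ` e) ` E = E"
    by (auto simp: BijGroup_def)
  let ?g = "inv\<^bsub>BijGroup A\<^esub> f"
  have "(\<lambda>e. ?g ` e) ` E = (\<lambda>e. ?g ` e) ` (\<lambda>e. f ` e) ` E"
    using f(2) by simp
  also have "\<dots> = (\<lambda>e. ?g ` f ` e) ` E"
    by (simp add: image_image)
  also have "\<dots> = (\<lambda>e. e) ` E"
  proof (rule image_cong)
    fix e assume "e \<in> E"
    then show "?g ` f ` e = e"
      using assms BijGroup_inv_apply[OF f(1)] by (force simp: image_image)
  qed simp
  finally show "?g \<in> {f \<in> carrier (BijGroup A). (\<lambda>e. f ` e) ` E = E}"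
    using f group.inv_closed[OF group_BijGroup] by (simp add: BijGroup_def)
next
  fix f g
  assume "f \<in> {f \<in> carrier (BijGroup A). (\<lambda>e. f ` e) ` E = E}"
    and "g \<in> {f \<in> carrier (BijGroup A). (\<lambda>e. f ` e) ` E = E}"
  then have f: "f \<in> Bij A" "(\<lambda>e. f ` e) ` E = E" and g: "g \<in> Bij A" "(\<lambda>e. g ` e) ` E = E"
    by (auto simp: BijGroup_def)
  have "(\<lambda>e. (f \<otimes>\<^bsub>BijGroup A\<^esub> g) ` e) ` E = (\<lambda>e. f ` e) ` (\<lambda>e. g ` e) ` E"
    unfolding image_image
    using assms BijGroup_mult_apply[OF f(1) g(1)] by (intro image_cong) (auto simp: image_image)
  with f g show "f \<otimes>\<^bsub>BijGroup A\<^esub> g \<in> {f \<in> carrier (BijGroup A). (\<lambda>e. f ` e) ` E = E}"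
    using compose_Bij by (auto simp: BijGroup_def)
qed

definition circulant_edges :: "nat \<Rightarrow> side \<Rightarrow> nat \<Rightarrow> vert set set" where
  "circulant_edges n s c = {{(s, i, j), (s, (i + c) mod n, \<not> j)} | i j. i < n}"

lemma outer_edges_circulant: "outer_edges n = circulant_edges n U 1"
  by (simp add: outer_edges_def circulant_edges_def)

lemma inner_edges_circulant: "inner_edges n k = circulant_edges n V k"
  by (simp add: inner_edges_def circulant_edges_def)

lemma finite_circulant_edges: "finite (circulant_edges n s c)"
  unfolding circulant_edges_def by (rule finite_edge_family)

lemma finite_spoke_edges: "finite (spoke_edges n)"
  unfolding spoke_edges_def by (rule finite_edge_family)

lemma circulant_edge_subset_verts: "e \<in> circulant_edges n s c \<Longrightarrow> e \<subseteq> verts n"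
  by (auto simp: circulant_edges_def)

lemma spoke_edge_subset_verts: "e \<in> spoke_edges n \<Longrightarrow> e \<subseteq> verts n"
  by (auto simp: spoke_edges_def)

lemma circulant_edge_side: "e \<in> circulant_edges n s c \<Longrightarrow> (s', i, j) \<in> e \<Longrightarrow> s' = s"
  by (auto simp: circulant_edges_def)

lemma circulant_edge_memI:
  assumes "a < n" and "b < n" and "b = (a + c) mod n \<or> a = (b + c) mod n"
  shows "{(s, a, j), (s, b, \<not> j)} \<in> circulant_edges n s c"
  using assms(3)
proof
  assume "b = (a + c) mod n"
  with assms(1) show ?thesis
    unfolding circulant_edges_def by blast
next
  assume "a = (b + c) mod n"
  then have "{(s, a, j), (s, b, \<not> j)} = {(s, b, \<not> j), (s, (b + c) mod n, \<not> \<not> j)}"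
    by auto
  with assms(2) show ?thesis
    unfolding circulant_edges_def by blast
qed

lemma circulant_edge_iff:
  assumes "i < n" and "c \<le> n"
  shows "{(s, i, j), y} \<in> circulant_edges n s c \<longleftrightarrow>
    y = (s, (i + c) mod n, \<not> j) \<or> y = (s, (i + (n - c)) mod n, \<not> j)"
proof
  assume "{(s, i, j), y} \<in> circulant_edges n s c"
  then obtain i' j' where e: "{(s, i, j), y} = {(s, i', j'), (s, (i' + c) mod n, \<not> j')}" "i' < n"
    unfolding circulant_edges_def by blast
  then have "(i = i' \<and> j = j' \<and> y = (s, (i' + c) mod n, \<not> j'))
      \<or> (i = (i' + c) mod n \<and> j = (\<not> j') \<and> y = (s, i', j'))"
    by (auto simp: doubleton_eq_iff)
  then show "y = (s, (i + c) mod n, \<not> j) \<or> y = (s, (i + (n - c)) mod n, \<not> j)"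
    using eq_add_mod_iff[OF assms(1) e(2) assms(2)] by auto
next
  have "(i + (n - c)) mod n < n" "(i + c) mod n < n"
    using assms(1) by simp_all
  moreover have "i = ((i + (n - c)) mod n + c) mod n"
    using eq_add_mod_iff[OF assms(1) \<open>(i + (n - c)) mod n < n\<close> assms(2)] by simp
  ultimately show "y = (s, (i + c) mod n, \<not> j) \<or> y = (s, (i + (n - c)) mod n, \<not> j) \<Longrightarrow>
      {(s, i, j), y} \<in> circulant_edges n s c"
    using circulant_edge_memI[OF assms(1)] by blast
qed

lemma spoke_edge_memI: "i < n \<Longrightarrow> {(U, i, j), (V, i, \<not> j)} \<in> spoke_edges n"
  unfolding spoke_edges_def by blast

lemma spoke_edge_U_iff: "i < n \<Longrightarrow> {(U, i, j), y} \<in> spoke_edges n \<longleftrightarrow> y = (V, i, \<not> j)"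
  using spoke_edge_memI[of i n j] by (auto simp: spoke_edges_def doubleton_eq_iff)

lemma spoke_edge_V_iff: "i < n \<Longrightarrow> {(V, i, j), y} \<in> spoke_edges n \<longleftrightarrow> y = (U, i, \<not> j)"
  using spoke_edge_memI[of i n "\<not> j"] by (auto simp: spoke_edges_def doubleton_eq_iff insert_commute)

lemma subgroup_Cnk: "subgroup (Cnk n k) (SymV n)"
proof -
  let ?stab = "\<lambda>E. {f \<in> carrier (SymV n). (\<lambda>e. f ` e) ` E = E}"
  have "Cnk n k = ?stab (outer_edges n) \<inter> ?stab (inner_edges n k) \<inter> ?stab (spoke_edges n)"
    by (auto simp: Cnk_def)
  moreover have "subgroup (?stab (outer_edges n)) (SymV n)" "subgroup (?stab (inner_edges n k)) (SymV n)"
    unfolding outer_edges_circulant inner_edges_circulant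
    by (intro subgroup_edge_stabilizer circulant_edge_subset_verts; assumption)+
  moreover have "subgroup (?stab (spoke_edges n)) (SymV n)"
    by (intro subgroup_edge_stabilizer spoke_edge_subset_verts)
  ultimately show ?thesis
    by (simp add: group.subgroups_Inter_pair[OF group_BijGroup])
qed

lemma Cnk_iff:
  "f \<in> Cnk n k \<longleftrightarrow> f \<in> Bij (verts n)
    \<and> (\<lambda>e. f ` e) ` circulant_edges n U 1 = circulant_edges n U 1
    \<and> (\<lambda>e. f ` e) ` circulant_edges n V k = circulant_edges n V k
    \<and> (\<lambda>e. f ` e) ` spoke_edges n = spoke_edges n"
  by (simp only: Cnk_def mem_Collect_eq outer_edges_circulant inner_edges_circulant carrier_BijGroup)

lemma Cnk_Bij: "f \<in> Cnk n k \<Longrightarrow> f \<in> Bij (verts n)"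
  by (simp only: Cnk_iff)

lemma Cnk_memI:
  assumes "f \<in> Bij (verts n)"
    and "\<And>e. e \<in> circulant_edges n U 1 \<Longrightarrow> f ` e \<in> circulant_edges n U 1"
    and "\<And>e. e \<in> circulant_edges n V k \<Longrightarrow> f ` e \<in> circulant_edges n V k"
    and "\<And>e. e \<in> spoke_edges n \<Longrightarrow> f ` e \<in> spoke_edges n"
  shows "f \<in> Cnk n k"
proof -
  have f: "bij_betw f (verts n) (verts n)"
    using assms(1) by (simp add: Bij_def)
  have "(\<lambda>e. f ` e) ` circulant_edges n U 1 = circulant_edges n U 1"
    by (rule edge_image_eq_if_maps_into[OF f circulant_edge_subset_verts finite_circulant_edges assms(2)])
  moreover have "(\<lambda>e. f ` e) ` circulant_edges n V k = circulant_edges n V k"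
    by (rule edge_image_eq_if_maps_into[OF f circulant_edge_subset_verts finite_circulant_edges assms(3)])
  moreover have "(\<lambda>e. f ` e) ` spoke_edges n = spoke_edges n"
    by (rule edge_image_eq_if_maps_into[OF f spoke_edge_subset_verts finite_spoke_edges assms(4)])
  ultimately show ?thesis
    using assms(1) by (simp only: Cnk_iff)
qed

lemma Cnk_edge_iff:
  assumes "f \<in> Cnk n k" and "x \<in> verts n" and "y \<in> verts n"
  shows "{f x, f y} \<in> circulant_edges n U 1 \<longleftrightarrow> {x, y} \<in> circulant_edges n U 1"
    and "{f x, f y} \<in> circulant_edges n V k \<longleftrightarrow> {x, y} \<in> circulant_edges n V k"
    and "{f x, f y} \<in> spoke_edges n \<longleftrightarrow> {x, y} \<in> spoke_edges n"
proof -
  have inj: "inj_on f (verts n)"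
    using Cnk_Bij[OF assms(1)] by (simp add: Bij_def bij_betw_def)
  have outer: "(\<lambda>e. f ` e) ` circulant_edges n U 1 = circulant_edges n U 1"
    and inner: "(\<lambda>e. f ` e) ` circulant_edges n V k = circulant_edges n V k"
    and spoke: "(\<lambda>e. f ` e) ` spoke_edges n = spoke_edges n"
    using assms(1) by (simp_all only: Cnk_iff)
  show "{f x, f y} \<in> circulant_edges n U 1 \<longleftrightarrow> {x, y} \<in> circulant_edges n U 1"
    by (rule doubleton_image_mem_iff[OF inj circulant_edge_subset_verts outer assms(2,3)])
  show "{f x, f y} \<in> circulant_edges n V k \<longleftrightarrow> {x, y} \<in> circulant_edges n V k"
    by (rule doubleton_image_mem_iff[OF inj circulant_edge_subset_verts inner assms(2,3)])
  show "{f x, f y} \<in> spoke_edges n \<longleftrightarrow> {x, y} \<in> spoke_edges n"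
    by (rule doubleton_image_mem_iff[OF inj spoke_edge_subset_verts spoke assms(2,3)])
qed

lemma Cnk_inj:
  assumes "f \<in> Cnk n k" and "x \<in> verts n" and "y \<in> verts n"
  shows "f x = f y \<longleftrightarrow> x = y"
  using Cnk_Bij[OF assms(1)] assms(2,3) by (auto simp: Bij_def bij_betw_def dest: inj_onD)

lemma Cnk_in_verts: "f \<in> Cnk n k \<Longrightarrow> x \<in> verts n \<Longrightarrow> f x \<in> verts n"
  using Cnk_Bij Bij_imp_funcset by blast

lemma Cnk_U_side:
  assumes "f \<in> Cnk n k" and "i < n"
  obtains a b where "f (U, i, j) = (U, a, b)" and "a < n"
proof -
  have "{(U, i, j), (U, (i + 1) mod n, \<not> j)} \<in> circulant_edges n U 1"
    using assms(2) unfolding circulant_edges_def by blast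
  then have "{f (U, i, j), f (U, (i + 1) mod n, \<not> j)} \<in> circulant_edges n U 1"
    using Cnk_edge_iff(1)[OF assms(1)] assms(2) by simp
  moreover obtain s a b where fx: "f (U, i, j) = (s, a, b)"
    by (cases "f (U, i, j)")
  ultimately have "s = U"
    by (metis circulant_edge_side insertI1)
  moreover have "a < n"
    using Cnk_in_verts[OF assms(1), of "(U, i, j)"] assms(2) fx by simp
  ultimately show ?thesis
    using that fx by simp
qed

definition dihedral_map :: "nat \<Rightarrow> nat \<Rightarrow> bool \<Rightarrow> nat \<Rightarrow> nat" where
  "dihedral_map n a r = (\<lambda>i\<in>{..<n}. (a + (if r then n - i else i)) mod n)"

definition lift_map :: "nat \<Rightarrow> (nat \<Rightarrow> nat) \<Rightarrow> bool \<Rightarrow> vert \<Rightarrow> vert" where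
  "lift_map n d b = restrict (\<lambda>(s, i, j). (s, d i, j \<noteq> b)) (verts n)"

lemma dihedral_map_apply: "i < n \<Longrightarrow> dihedral_map n a r i = (a + (if r then n - i else i)) mod n"
  by (simp add: dihedral_map_def)

lemma lift_map_apply [simp]: "i < n \<Longrightarrow> lift_map n d b (s, i, j) = (s, d i, j \<noteq> b)"
  by (simp add: lift_map_def)

lemma lift_map_compose:
  assumes "d2 \<in> {..<n} \<rightarrow> {..<n}"
  shows "compose (verts n) (lift_map n d1 b1) (lift_map n d2 b2)
    = lift_map n (compose {..<n} d1 d2) (b1 \<noteq> b2)"
proof (rule extensionalityI[OF compose_extensional])
  show "lift_map n (compose {..<n} d1 d2) (b1 \<noteq> b2) \<in> extensional (verts n)"
    by (simp add: lift_map_def)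
  fix x assume "x \<in> verts n"
  then obtain s i j where "x = (s, i, j)" and i: "i < n"
    by (cases x) auto
  moreover have "d2 i < n"
    using assms i by auto
  ultimately show "compose (verts n) (lift_map n d1 b1) (lift_map n d2 b2) x
      = lift_map n (compose {..<n} d1 d2) (b1 \<noteq> b2) x"
    by (auto simp: compose_def)
qed

lemma lift_map_Bij:
  assumes "d \<in> Bij {..<n}"
  shows "lift_map n d b \<in> Bij (verts n)"
proof -
  have d: "bij_betw d {..<n} {..<n}"
    using assms by (simp add: Bij_def)
  let ?d' = "inv_into {..<n} d"
  have d_less: "d i < n" and d'_less: "?d' i < n" if "i < n" for i
    using that bij_betwE[OF d] bij_betwE[OF bij_betw_inv_into[OF d]] by auto
  have "bij_betw (lift_map n d b) (verts n) (verts n)"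
  proof (rule bij_betw_byWitness[where f' = "lift_map n ?d' b"])
    show "\<forall>x\<in>verts n. lift_map n ?d' b (lift_map n d b x) = x"
      using d d_less by (auto simp: verts_def bij_betw_inv_into_left)
    show "\<forall>x\<in>verts n. lift_map n d b (lift_map n ?d' b x) = x"
      using d d'_less by (auto simp: verts_def bij_betw_inv_into_right)
    show "lift_map n d b ` verts n \<subseteq> verts n"
      using d_less by (auto simp: verts_def)
    show "lift_map n ?d' b ` verts n \<subseteq> verts n"
      using d'_less by (auto simp: verts_def)
  qed
  then show ?thesis
    by (simp add: Bij_def lift_map_def)
qed

lemma lift_map_hom: "(\<lambda>d. lift_map n d False) \<in> hom (BijGroup {..<n}) (SymV n)"
proof (rule homI)
  fix d assume "d \<in> carrier (BijGroup {..<n})"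
  then show "lift_map n d False \<in> carrier (SymV n)"
    using lift_map_Bij by (simp add: carrier_BijGroup)
next
  fix d1 d2 assume "d1 \<in> carrier (BijGroup {..<n})" and "d2 \<in> carrier (BijGroup {..<n})"
  then have d: "d1 \<in> Bij {..<n}" "d2 \<in> Bij {..<n}"
    by (simp_all add: carrier_BijGroup)
  then show "lift_map n (d1 \<otimes>\<^bsub>BijGroup {..<n}\<^esub> d2) False
      = lift_map n d1 False \<otimes>\<^bsub>SymV n\<^esub> lift_map n d2 False"
    using lift_map_compose[OF Bij_imp_funcset[OF d(2)], of d1 False False] lift_map_Bij
    by (simp add: BijGroup_def compose_Bij)
qed

lemma lift_map_eq_iff:
  assumes "0 < n" and "d1 \<in> extensional {..<n}" and "d2 \<in> extensional {..<n}"
  shows "lift_map n d1 b1 = lift_map n d2 b2 \<longleftrightarrow> d1 = d2 \<and> b1 = b2"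
proof
  assume eq: "lift_map n d1 b1 = lift_map n d2 b2"
  have "d1 i = d2 i \<and> b1 = b2" if "i < n" for i
    using fun_cong[OF eq, of "(U, i, False)"] that by simp
  then show "d1 = d2 \<and> b1 = b2"
    using assms by (auto intro: extensionalityI)
qed simp

definition lift_pair :: "nat \<Rightarrow> (nat \<Rightarrow> nat) \<times> int \<Rightarrow> vert \<Rightarrow> vert" where
  "lift_pair n = (\<lambda>(d, z). lift_map n d (z = 1))"

lemma dihedral_map_adjacent:
  assumes "i < n" and "c \<le> n"
  shows "dihedral_map n a r ((i + c) mod n) = (dihedral_map n a r i + c) mod n
    \<or> dihedral_map n a r i = (dihedral_map n a r ((i + c) mod n) + c) mod n"
proof (cases r)
  case False
  with assms show ?thesis
    by (simp add: dihedral_map_apply mod_simps add.assoc)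
next
  case True
  have "((a + (n - (i + c) mod n)) mod n + c) mod n = (a + (n - (i + c) mod n) + c) mod n"
    by (simp add: mod_add_left_eq)
  also have "\<dots> = (a + (n - i)) mod n"
  proof (cases "i + c < n")
    case False
    then have "a + (n - (i + c) mod n) + c = a + (n - i) + n"
      using assms by (simp add: add_mod_bounded)
    then show ?thesis
      by (metis mod_add_self2)
  qed simp
  finally show ?thesis
    using assms True by (simp add: dihedral_map_apply)
qed

lemma rho_delta_beta_lift_map:
  "rho n = lift_map n (dihedral_map n 1 False) False"
  "delta n = lift_map n (dihedral_map n 0 True) False"
  "beta n = lift_map n (dihedral_map n 0 False) True"
  by (auto simp: rho_def delta_def beta_def lift_map_def dihedral_map_def verts_def add.commute
      intro!: restrict_ext)

lemma dihedral_generators: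
  "restrict (\<lambda>i. (i + 1) mod n) {..<n} = dihedral_map n 1 False"
  "restrict (\<lambda>i. (n - i) mod n) {..<n} = dihedral_map n 0 True"
  by (auto simp: dihedral_map_def add.commute intro!: restrict_ext)

lemma carrier_dihedral:
  "carrier (dihedral n) = generate (BijGroup {..<n}) {dihedral_map n 1 False, dihedral_map n 0 True}"
  unfolding dihedral_def dihedral_generators by simp

lemma lift_map_mem_Cnk:
  assumes d: "d \<in> Bij {..<n}"
    and adj: "\<And>i c. i < n \<Longrightarrow> c \<in> {1, k} \<Longrightarrow>
      d ((i + c) mod n) = (d i + c) mod n \<or> d i = (d ((i + c) mod n) + c) mod n"
  shows "lift_map n d b \<in> Cnk n k"
proof (rule Cnk_memI[OF lift_map_Bij[OF d]])
  have d_less: "d i < n" if "i < n" for i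
    using d that Bij_imp_funcset by fastforce
  have circ: "lift_map n d b ` e \<in> circulant_edges n s c"
    if "e \<in> circulant_edges n s c" and "c \<in> {1, k}" for e s c
  proof -
    from that(1) obtain i j where e: "e = {(s, i, j), (s, (i + c) mod n, \<not> j)}" and i: "i < n"
      by (auto simp: circulant_edges_def)
    then have "lift_map n d b ` e = {(s, d i, j \<noteq> b), (s, d ((i + c) mod n), \<not> (j \<noteq> b))}"
      by auto
    moreover have "(i + c) mod n < n"
      using i by simp
    ultimately show ?thesis
      using circulant_edge_memI[OF d_less[OF i] d_less, of "(i + c) mod n" c s "j \<noteq> b"]
        adj[OF i that(2)] by simp
  qed
  show "lift_map n d b ` e \<in> circulant_edges n U 1" if "e \<in> circulant_edges n U 1" for e
    using circ[OF that] by simp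
  show "lift_map n d b ` e \<in> circulant_edges n V k" if "e \<in> circulant_edges n V k" for e
    using circ[OF that] by simp
  show "lift_map n d b ` e \<in> spoke_edges n" if "e \<in> spoke_edges n" for e
  proof -
    from that obtain i j where "e = {(U, i, j), (V, i, \<not> j)}" and i: "i < n"
      by (auto simp: spoke_edges_def)
    then show ?thesis
      using spoke_edge_memI[OF d_less[OF i], of "j \<noteq> b"] by auto
  qed
qed

lemma theta_apply_U:
  "i < n \<Longrightarrow> theta n k (U, i, j) = (if odd i \<noteq> j then (U, (i + 2 * k) mod n, j) else (U, i, j))"
  by (cases j) (auto simp: theta_def)

lemma theta_apply_V:
  "i < n \<Longrightarrow> theta n k (V, i, j) = (if odd i \<noteq> j then (V, i, j) else (V, (i + 2 * k) mod n, j))"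
  by (cases j) (auto simp: theta_def)

locale even_dgp =
  fixes n k :: nat
  assumes even_n: "even n" and even_k: "even k" and k_pos: "1 \<le> k" and k_less: "2 * k < n"
begin

lemma k_ge_2: "2 \<le> k"
  using even_k k_pos by (cases "k = 1") auto

lemma n_ge_6: "6 \<le> n"
  using k_ge_2 k_less even_n by presburger

lemma n_pos: "0 < n"
  using n_ge_6 by simp

lemma odd_mod_n: "odd (x mod n) \<longleftrightarrow> odd x"
  using even_n by (simp add: dvd_mod_iff)

lemma Cnk_fixes_outer_path:
  assumes t: "t \<in> Cnk n k"
    and fix0: "t (U, 0, False) = (U, 0, False)" and fix1: "t (U, 1, True) = (U, 1, True)"
  shows "i < n \<Longrightarrow> t (U, i, odd i) = (U, i, odd i)"
proof (induction i rule: less_induct)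
  case (less i)
  show ?case
  proof (cases "i < 2")
    case False
    then obtain m where i: "i = m + 2"
      using le_Suc_ex[of 2 i] by (auto simp: add.commute)
    have m: "m + 2 < n"
      using less.prems i by simp
    have fixed: "t (U, m, odd m) = (U, m, odd m)" "t (U, m + 1, \<not> odd m) = (U, m + 1, \<not> odd m)"
      using less.IH[of m] less.IH[of "m + 1"] m i by auto
    have "{(U, m + 1, \<not> odd m), (U, m + 2, odd m)} \<in> circulant_edges n U 1"
      using circulant_edge_memI[of "m + 1" n "m + 2" 1 U "\<not> odd m"] m by simp
    then have "{(U, m + 1, \<not> odd m), t (U, m + 2, odd m)} \<in> circulant_edges n U 1"
      using Cnk_edge_iff(1)[OF t, of "(U, m + 1, \<not> odd m)" "(U, m + 2, odd m)"] fixed m by simp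
    then have "t (U, m + 2, odd m) = (U, m + 2, odd m) \<or> t (U, m + 2, odd m) = (U, m, odd m)"
      using circulant_edge_iff[of "m + 1" n 1 U "\<not> odd m"] m by (simp add: add_mod_bounded)
    moreover have "t (U, m + 2, odd m) \<noteq> (U, m, odd m)"
      using Cnk_inj[OF t, of "(U, m + 2, odd m)" "(U, m, odd m)"] fixed(1) m by auto
    ultimately show ?thesis
      using i by simp
  qed (use fix0 fix1 less_2_cases[of i] in auto)
qed

lemma Cnk_fixes_first_layer:
  assumes t: "t \<in> Cnk n k"
    and "t (U, 0, False) = (U, 0, False)" and "t (U, 1, True) = (U, 1, True)" and i: "i < n"
  shows "t (U, i, odd i) = (U, i, odd i)" and "t (V, i, \<not> odd i) = (V, i, \<not> odd i)"
proof -
  show U: "t (U, i, odd i) = (U, i, odd i)"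
    using Cnk_fixes_outer_path assms by blast
  have "{(U, i, odd i), (V, i, \<not> odd i)} \<in> spoke_edges n"
    by (rule spoke_edge_memI[OF i])
  then have "{(U, i, odd i), t (V, i, \<not> odd i)} \<in> spoke_edges n"
    using Cnk_edge_iff(3)[OF t, of "(U, i, odd i)" "(V, i, \<not> odd i)"] U i by simp
  then show "t (V, i, \<not> odd i) = (V, i, \<not> odd i)"
    using spoke_edge_U_iff i by blast
qed

lemma inner_two_steps_eq_imp:
  assumes "i < n" and "(i + 2 * k) mod n = ((i + (n - k)) mod n + (n - k)) mod n"
  shows "n = 4 * k"
proof -
  have "i + (n - k) + (n - k) = (i + (n - 2 * k)) + n"
    using k_less by simp
  then have "((i + (n - k)) mod n + (n - k)) mod n = (i + (n - 2 * k)) mod n"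
    by (metis mod_add_left_eq mod_add_self2)
  with assms show ?thesis
    using k_less k_pos add_mod_bounded[of i n "2 * k"] add_mod_bounded[of i n "n - 2 * k"]
    by (auto split: if_splits)
qed

text \<open>
  (V, i, odd i) is a common inner neighbour of the fixed vertices (V, i \<plusminus> k, \<not> odd i), whose
  other inner neighbours (V, i + 2k, odd i) and (V, i - 2k, odd i) coincide only if n = 4k.
\<close>
lemma Cnk_second_layer_cases:
  assumes t: "t \<in> Cnk n k"
    and first: "\<And>i. i < n \<Longrightarrow> t (V, i, \<not> odd i) = (V, i, \<not> odd i)" and i: "i < n"
  shows "t (V, i, odd i) = (V, i, odd i)
    \<or> (n = 4 * k \<and> t (V, i, odd i) = (V, (i + 2 * k) mod n, odd i))"
proof -
  define p q where "p = (i + k) mod n" and "q = (i + (n - k)) mod n"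
  have pq: "p < n" "q < n" "odd p = odd i" "odd q = odd i"
    using n_pos even_n even_k k_less by (auto simp: p_def q_def odd_mod_n)
  have fixed: "t (V, p, \<not> odd i) = (V, p, \<not> odd i)" "t (V, q, \<not> odd i) = (V, q, \<not> odd i)"
    using first[OF pq(1)] first[OF pq(2)] pq(3,4) by simp_all
  have "{(V, i, odd i), (V, p, \<not> odd i)} \<in> circulant_edges n V k"
    "{(V, i, odd i), (V, q, \<not> odd i)} \<in> circulant_edges n V k"
    using circulant_edge_iff[OF i] k_less by (auto simp: p_def q_def)
  then have "{t (V, i, odd i), t (V, p, \<not> odd i)} \<in> circulant_edges n V k"
    "{t (V, i, odd i), t (V, q, \<not> odd i)} \<in> circulant_edges n V k"
    using Cnk_edge_iff(2)[OF t, of "(V, i, odd i)"] pq i by simp_all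
  then have "{(V, p, \<not> odd i), t (V, i, odd i)} \<in> circulant_edges n V k"
    "{(V, q, \<not> odd i), t (V, i, odd i)} \<in> circulant_edges n V k"
    unfolding fixed by (simp_all add: insert_commute)
  then have "t (V, i, odd i) \<in> {(V, (p + k) mod n, odd i), (V, (p + (n - k)) mod n, odd i)}"
    "t (V, i, odd i) \<in> {(V, (q + k) mod n, odd i), (V, (q + (n - k)) mod n, odd i)}"
    using circulant_edge_iff[OF pq(1), of k V "\<not> odd i"] circulant_edge_iff[OF pq(2), of k V "\<not> odd i"]
      k_less by auto
  moreover have "(p + (n - k)) mod n = i"
    using eq_add_mod_iff[OF pq(1) i, of k] k_less unfolding p_def by simp
  moreover have "(q + k) mod n = i"
    using eq_add_mod_iff[OF i pq(2), of k] k_less unfolding q_def by simp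
  moreover have "(p + k) mod n = (i + 2 * k) mod n"
    unfolding p_def by (simp add: mod_add_left_eq mult_2 add.assoc)
  ultimately show ?thesis
    using inner_two_steps_eq_imp[OF i] by (auto simp: q_def)
qed

lemma Cnk_eq_one_if_fixes_U:
  assumes t: "t \<in> Cnk n k" and fixU: "\<And>i j. i < n \<Longrightarrow> t (U, i, j) = (U, i, j)"
  shows "t = \<one>\<^bsub>SymV n\<^esub>"
proof (rule BijGroup_one_eqI[OF Cnk_Bij[OF t]])
  fix x assume "x \<in> verts n"
  then obtain s i j where x: "x = (s, i, j)" and i: "i < n"
    by (cases x) auto
  show "t x = x"
  proof (cases s)
    case V
    have "{(U, i, \<not> j), t (V, i, j)} \<in> spoke_edges n"
      using Cnk_edge_iff(3)[OF t, of "(U, i, \<not> j)" "(V, i, j)"] spoke_edge_memI[OF i, of "\<not> j"]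
        fixU[OF i] i by simp
    with i V x show ?thesis
      using spoke_edge_U_iff by simp
  qed (use fixU i x in simp)
qed

lemma Cnk_rigid_not_4k:
  assumes "n \<noteq> 4 * k" and t: "t \<in> Cnk n k"
    and fix0: "t (U, 0, False) = (U, 0, False)" and fix1: "t (U, 1, True) = (U, 1, True)"
  shows "t = \<one>\<^bsub>SymV n\<^esub>"
proof (rule Cnk_eq_one_if_fixes_U[OF t])
  fix i :: nat and j :: bool assume i: "i < n"
  have fixV: "t (V, i, odd i) = (V, i, odd i)"
    using Cnk_second_layer_cases[OF t Cnk_fixes_first_layer(2)[OF t fix0 fix1] i] assms(1) by blast
  have "{(V, i, odd i), t (U, i, \<not> odd i)} \<in> spoke_edges n"
    using Cnk_edge_iff(3)[OF t, of "(V, i, odd i)" "(U, i, \<not> odd i)"] spoke_edge_V_iff[OF i] fixV i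
    by simp
  then have "t (U, i, \<not> odd i) = (U, i, \<not> odd i)"
    using spoke_edge_V_iff[OF i] by simp
  then show "t (U, i, j) = (U, i, j)"
    using Cnk_fixes_first_layer(1)[OF t fix0 fix1 i] by (cases "j = odd i") auto
qed

lemma Cnk_4k_fixes_second_layer_U:
  assumes n4: "n = 4 * k" and t: "t \<in> Cnk n k"
    and fix0: "t (U, 0, False) = (U, 0, False)" and fix1: "t (U, 1, True) = (U, 1, True)"
    and fixV: "t (V, 0, False) = (V, 0, False)"
  shows "i < n \<Longrightarrow> t (U, i, \<not> odd i) = (U, i, \<not> odd i)"
proof (induction i)
  case 0
  have "{(V, 0, False), t (U, 0, True)} \<in> spoke_edges n"
    using Cnk_edge_iff(3)[OF t, of "(V, 0, False)" "(U, 0, True)"] spoke_edge_V_iff[OF n_pos] fixV n_pos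
    by simp
  then show ?case
    using spoke_edge_V_iff[OF n_pos] by simp
next
  case (Suc m)
  let ?y = "(U, m + 1, odd m)" and ?z = "(V, m + 1, \<not> odd m)"
  have m: "m + 1 < n"
    using Suc.prems by simp
  have "{(U, m, \<not> odd m), ?y} \<in> circulant_edges n U 1"
    using circulant_edge_memI[of m n "m + 1" 1 U "\<not> odd m"] m by simp
  then have "{(U, m, \<not> odd m), t ?y} \<in> circulant_edges n U 1"
    using Cnk_edge_iff(1)[OF t, of "(U, m, \<not> odd m)" ?y] Suc.IH m by simp
  then have along_outer: "t ?y = ?y \<or> t ?y = (U, (m + (n - 1)) mod n, odd m)"
    using circulant_edge_iff[of m n 1 U "\<not> odd m"] m by simp
  have spoke: "{t ?z, t ?y} \<in> spoke_edges n"
    using Cnk_edge_iff(3)[OF t, of ?y ?z] spoke_edge_memI[of "m + 1" n "odd m"] m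
    by (simp add: insert_commute)
  have "t ?z = ?z \<or> t ?z = (V, (m + 1 + 2 * k) mod n, \<not> odd m)"
    using Cnk_second_layer_cases[OF t Cnk_fixes_first_layer(2)[OF t fix0 fix1] m] by auto
  then have along_spoke: "t ?y = ?y \<or> t ?y = (U, (m + 1 + 2 * k) mod n, odd m)"
    using spoke spoke_edge_V_iff[of "m + 1" n "\<not> odd m" "t ?y"]
      spoke_edge_V_iff[of "(m + 1 + 2 * k) mod n" n "\<not> odd m" "t ?y"] m n_pos by auto
  have "(m + 1 + 2 * k) mod n \<noteq> (m + (n - 1)) mod n"
    using n4 m k_ge_2 add_mod_bounded[of "m + 1" n "2 * k"] add_mod_bounded[of m n "n - 1"]
    by (auto split: if_splits)
  with along_outer along_spoke show ?case
    by auto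
qed

lemma Cnk_rigid_4k:
  assumes n4: "n = 4 * k" and t: "t \<in> Cnk n k"
    and fix0: "t (U, 0, False) = (U, 0, False)" and fix1: "t (U, 1, True) = (U, 1, True)"
    and fixV: "t (V, 0, False) = (V, 0, False)"
  shows "t = \<one>\<^bsub>SymV n\<^esub>"
proof (rule Cnk_eq_one_if_fixes_U[OF t])
  show "t (U, i, j) = (U, i, j)" if "i < n" for i j
    using Cnk_fixes_first_layer(1)[OF t fix0 fix1 that] Cnk_4k_fixes_second_layer_U[OF assms that]
    by (cases "j = odd i") auto
qed

lemma theta_theta_apply:
  assumes n4: "n = 4 * k" and i: "i < n"
  shows "theta n k (theta n k (s, i, j)) = (s, i, j)"
proof -
  let ?i' = "(i + 2 * k) mod n"
  have "i + 2 * k + 2 * k = i + n"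
    using n4 by simp
  then have shift_twice: "(?i' + 2 * k) mod n = i"
    using i by (simp add: mod_add_left_eq)
  have "?i' < n" and "odd ?i' = odd i"
    using n_pos by (simp_all add: odd_mod_n)
  with i shift_twice show ?thesis
    by (cases s) (simp_all add: theta_apply_U theta_apply_V)
qed

lemma theta_in_verts: "x \<in> verts n \<Longrightarrow> theta n k x \<in> verts n"
  using n_pos by (cases x) (simp add: theta_def verts_def)

lemma theta_Bij:
  assumes "n = 4 * k"
  shows "theta n k \<in> Bij (verts n)"
proof -
  have "theta n k (theta n k x) = x" if "x \<in> verts n" for x
    using that theta_theta_apply[OF assms] by (cases x) simp
  then have "bij_betw (theta n k) (verts n) (verts n)"
    using theta_in_verts by (intro bij_betw_byWitness[where f' = "theta n k"]) auto
  then show ?thesis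
    by (simp add: Bij_def theta_def)
qed

lemma theta_theta:
  assumes "n = 4 * k"
  shows "theta n k \<otimes>\<^bsub>SymV n\<^esub> theta n k = \<one>\<^bsub>SymV n\<^esub>"
proof (rule BijGroup_one_eqI)
  show "theta n k \<otimes>\<^bsub>SymV n\<^esub> theta n k \<in> Bij (verts n)"
    using theta_Bij[OF assms] by (simp add: BijGroup_def compose_Bij)
  fix x assume x: "x \<in> verts n"
  then obtain s i j where "x = (s, i, j)" and "i < n"
    by (cases x) auto
  then show "(theta n k \<otimes>\<^bsub>SymV n\<^esub> theta n k) x = x"
    using BijGroup_mult_apply[OF theta_Bij[OF assms] theta_Bij[OF assms] x]
      theta_theta_apply[OF assms] by simp
qed

lemma theta_mem_Cnk:
  assumes n4: "n = 4 * k"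
  shows "theta n k \<in> Cnk n k"
proof (rule Cnk_memI[OF theta_Bij[OF n4]])
  fix e
  show "theta n k ` e \<in> circulant_edges n U 1" if "e \<in> circulant_edges n U 1"
  proof -
    from that obtain i j where e: "e = {(U, i, j), (U, (i + 1) mod n, \<not> j)}" and i: "i < n"
      by (auto simp: circulant_edges_def)
    have "((i + 1) mod n + 2 * k) mod n = ((i + 2 * k) mod n + 1) mod n"
      by (simp add: mod_simps ac_simps)
    then have "odd i \<noteq> j \<Longrightarrow> {(U, (i + 2 * k) mod n, j), (U, ((i + 1) mod n + 2 * k) mod n, \<not> j)}
        \<in> circulant_edges n U 1"
      using circulant_edge_memI[of "(i + 2 * k) mod n" n] n_pos by simp
    with that show ?thesis
      using i n_pos odd_mod_n[of "i + 1"] by (auto simp: e theta_apply_U)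
  qed
  show "theta n k ` e \<in> circulant_edges n V k" if "e \<in> circulant_edges n V k"
  proof -
    from that obtain i j where e: "e = {(V, i, j), (V, (i + k) mod n, \<not> j)}" and i: "i < n"
      by (auto simp: circulant_edges_def)
    have "i = (((i + k) mod n + 2 * k) mod n + k) mod n"
      using n4 i by (simp add: mod_simps ac_simps)
    then have "{(V, i, j), (V, ((i + k) mod n + 2 * k) mod n, \<not> j)} \<in> circulant_edges n V k"
      using circulant_edge_memI[of i n] i n_pos by simp
    moreover have "(i + 2 * k) mod n = ((i + k) mod n + k) mod n"
      by (simp add: mod_add_left_eq mult_2 add.assoc)
    then have "{(V, (i + 2 * k) mod n, j), (V, (i + k) mod n, \<not> j)} \<in> circulant_edges n V k"
      using circulant_edge_memI[of "(i + 2 * k) mod n" n "(i + k) mod n"] n_pos by simp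
    ultimately show ?thesis
      using i n_pos even_k odd_mod_n[of "i + k"] by (auto simp: e theta_apply_V)
  qed
  show "theta n k ` e \<in> spoke_edges n" if "e \<in> spoke_edges n"
  proof -
    from that obtain i j where e: "e = {(U, i, j), (V, i, \<not> j)}" and i: "i < n"
      by (auto simp: spoke_edges_def)
    with that show ?thesis
      using spoke_edge_memI[of "(i + 2 * k) mod n" n j] n_pos by (auto simp: theta_apply_U theta_apply_V)
  qed
qed

lemma Cnk_rigid_4k_theta:
  assumes n4: "n = 4 * k" and t: "t \<in> Cnk n k"
    and fix0: "t (U, 0, False) = (U, 0, False)" and fix1: "t (U, 1, True) = (U, 1, True)"
    and tV: "t (V, 0, False) = (V, 2 * k, False)"
  shows "t = theta n k"
proof -
  interpret SymV: group "SymV n"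
    by (rule group_BijGroup)
  have theta: "theta n k \<in> Cnk n k" "theta n k \<in> carrier (SymV n)"
    using theta_mem_Cnk[OF n4] theta_Bij[OF n4] by (simp_all add: carrier_BijGroup)
  have t_carrier: "t \<in> carrier (SymV n)"
    using Cnk_Bij[OF t] by (simp add: carrier_BijGroup)
  let ?t' = "theta n k \<otimes>\<^bsub>SymV n\<^esub> t"
  have t'_apply: "?t' x = theta n k (t x)" if "x \<in> verts n" for x
    using BijGroup_mult_apply theta t_carrier that by (simp add: carrier_BijGroup)
  have "?t' = \<one>\<^bsub>SymV n\<^esub>"
  proof (rule Cnk_rigid_4k[OF n4 subgroup.m_closed[OF subgroup_Cnk theta(1) t]])
    show "?t' (U, 0, False) = (U, 0, False)" "?t' (U, 1, True) = (U, 1, True)"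
      using t'_apply fix0 fix1 n_ge_6 by (simp_all add: theta_apply_U)
    show "?t' (V, 0, False) = (V, 0, False)"
      using t'_apply tV n4 n_pos by (simp add: theta_apply_V)
  qed
  have "t = (theta n k \<otimes>\<^bsub>SymV n\<^esub> theta n k) \<otimes>\<^bsub>SymV n\<^esub> t"
    using theta_theta[OF n4] t_carrier by simp
  also have "\<dots> = theta n k"
    using \<open>?t' = \<one>\<^bsub>SymV n\<^esub>\<close> theta t_carrier by (simp add: SymV.m_assoc)
  finally show ?thesis .
qed

lemma Cnk_rigid:
  assumes t: "t \<in> Cnk n k"
    and fix0: "t (U, 0, False) = (U, 0, False)" and fix1: "t (U, 1, True) = (U, 1, True)"
  shows "t = \<one>\<^bsub>SymV n\<^esub> \<or> (n = 4 * k \<and> t = theta n k)"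
proof (cases "n = 4 * k")
  case False
  then show ?thesis
    using Cnk_rigid_not_4k assms by blast
next
  case n4: True
  have "t (V, 0, False) = (V, 0, False) \<or> t (V, 0, False) = (V, 2 * k, False)"
    using Cnk_second_layer_cases[OF t Cnk_fixes_first_layer(2)[OF t fix0 fix1] n_pos] k_less by auto
  then show ?thesis
    using Cnk_rigid_4k[OF n4 t fix0 fix1] Cnk_rigid_4k_theta[OF n4 t fix0 fix1] n4 by blast
qed

lemma dihedral_generators_Bij:
  "{dihedral_map n 1 False, dihedral_map n 0 True} \<subseteq> Bij {..<n}"
proof -
  have "dihedral_map n a r \<in> Bij {..<n}" if "(a, r) \<in> {(1, False), (0, True)}" for a r
  proof -
    have "inj_on (dihedral_map n a r) {..<n}"
      using that n_ge_6 add_mod_bounded[of 1 n] add_mod_bounded[of 0 n]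
      by (auto simp: inj_on_def dihedral_map_apply split: if_splits)
    moreover have "dihedral_map n a r ` {..<n} \<subseteq> {..<n}"
      using n_pos by (auto simp: dihedral_map_apply)
    ultimately have "bij_betw (dihedral_map n a r) {..<n} {..<n}"
      by (simp add: bij_betw_def endo_inj_surj)
    then show ?thesis
      by (simp add: Bij_def dihedral_map_def)
  qed
  then show ?thesis
    by blast
qed

lemma carrier_dihedral_subset_Bij: "carrier (dihedral n) \<subseteq> Bij {..<n}"
  using group.generate_in_carrier[OF group_BijGroup, of _ "{..<n}"] dihedral_generators_Bij
  unfolding carrier_dihedral carrier_BijGroup by blast

lemma group_dihedral: "group (dihedral n)"
proof -
  have "subgroup (carrier (dihedral n)) (BijGroup {..<n})"
    unfolding carrier_dihedral
    using group.generate_is_subgroup[OF group_BijGroup] dihedral_generators_Bij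
    unfolding carrier_BijGroup by blast
  then have "group ((BijGroup {..<n})\<lparr>carrier := carrier (dihedral n)\<rparr>)"
    by (rule group.subgroup_imp_group[OF group_BijGroup])
  then show ?thesis
    by (simp add: dihedral_def)
qed

lemma dihedral_map_mem_dihedral: "dihedral_map n a r \<in> carrier (dihedral n)"
proof (induction a)
  case 0
  show ?case
  proof (cases r)
    case False
    have "dihedral_map n 0 r = \<one>\<^bsub>BijGroup {..<n}\<^esub>"
      using False by (auto simp: dihedral_map_def BijGroup_def intro!: restrict_ext)
    then show ?thesis
      unfolding carrier_dihedral by (simp add: generate.one)
  next
    case True
    then show ?thesis
      unfolding carrier_dihedral by (simp add: generate.incl)
  qed
next
  case (Suc a)
  have "dihedral_map n a r \<in> Bij {..<n}" and "dihedral_map n 1 False \<in> Bij {..<n}"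
    using Suc.IH carrier_dihedral_subset_Bij dihedral_generators_Bij by auto
  then have "dihedral_map n 1 False \<otimes>\<^bsub>BijGroup {..<n}\<^esub> dihedral_map n a r
      = compose {..<n} (dihedral_map n 1 False) (dihedral_map n a r)"
    by (simp add: BijGroup_def)
  also have "\<dots> = dihedral_map n (Suc a) r"
    using n_pos by (auto simp: compose_def dihedral_map_def mod_simps intro!: restrict_ext)
  finally have step: "dihedral_map n 1 False \<otimes>\<^bsub>BijGroup {..<n}\<^esub> dihedral_map n a r
      = dihedral_map n (Suc a) r" .
  show ?case
    unfolding carrier_dihedral step[symmetric]
    by (rule generate.eng[OF generate.incl Suc.IH[unfolded carrier_dihedral]]) simp
qed

lemma lift_dihedral_mem_Cnk: "lift_map n (dihedral_map n a r) b \<in> Cnk n k"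
proof (rule lift_map_mem_Cnk)
  show "dihedral_map n a r \<in> Bij {..<n}"
    using carrier_dihedral_subset_Bij dihedral_map_mem_dihedral by blast
  fix i c :: nat assume "i < n" and "c \<in> {1, k}"
  then show "dihedral_map n a r ((i + c) mod n) = (dihedral_map n a r i + c) mod n
      \<or> dihedral_map n a r i = (dihedral_map n a r ((i + c) mod n) + c) mod n"
    using dihedral_map_adjacent[of i n c a r] k_less by auto
qed

lemma generate_subset_Cnk: "generate (SymV n) {rho n, delta n, beta n} \<subseteq> Cnk n k"
  by (rule group.generate_subgroup_incl[OF group_BijGroup _ subgroup_Cnk])
    (simp add: rho_delta_beta_lift_map lift_dihedral_mem_Cnk)

lemma generate_theta_subset_Cnk:
  assumes "n = 4 * k"
  shows "generate (SymV n) {rho n, delta n, beta n, theta n k} \<subseteq> Cnk n k"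
  by (rule group.generate_subgroup_incl[OF group_BijGroup _ subgroup_Cnk])
    (simp add: rho_delta_beta_lift_map lift_dihedral_mem_Cnk theta_mem_Cnk[OF assms])

lemma lift_map_mem_generate:
  assumes d: "d \<in> carrier (dihedral n)"
  shows "lift_map n d b \<in> generate (SymV n) {rho n, delta n, beta n}"
proof -
  let ?h = "\<lambda>d. lift_map n d False"
  have "group_hom (BijGroup {..<n}) (SymV n) ?h"
    by (simp add: group_hom_def group_hom_axioms_def group_BijGroup lift_map_hom)
  then have "generate (SymV n) (?h ` {dihedral_map n 1 False, dihedral_map n 0 True})
      = ?h ` generate (BijGroup {..<n}) {dihedral_map n 1 False, dihedral_map n 0 True}"
    by (rule group_hom.generate_img) (use dihedral_generators_Bij in \<open>simp add: carrier_BijGroup\<close>)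
  then have "?h ` carrier (dihedral n) = generate (SymV n) {rho n, delta n}"
    by (simp add: carrier_dihedral rho_delta_beta_lift_map)
  then have lift_False: "lift_map n d False \<in> generate (SymV n) {rho n, delta n, beta n}"
    using d group.mono_generate[OF group_BijGroup, of "{rho n, delta n}" "{rho n, delta n, beta n}"]
    by blast
  show ?thesis
  proof (cases b)
    case True
    have dB: "d \<in> Bij {..<n}"
      using d carrier_dihedral_subset_Bij by blast
    have "dihedral_map n 0 False = (\<lambda>i\<in>{..<n}. i)"
      by (auto simp: dihedral_map_def intro!: restrict_ext)
    then have "beta n \<otimes>\<^bsub>SymV n\<^esub> lift_map n d False
        = compose (verts n) (lift_map n (\<lambda>i\<in>{..<n}. i) True) (lift_map n d False)"
      using lift_map_Bij[OF dB] lift_map_Bij[OF id_Bij] by (simp add: rho_delta_beta_lift_map BijGroup_def)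
    also have "\<dots> = lift_map n d True"
      using lift_map_compose[OF Bij_imp_funcset[OF dB]] Bij_imp_funcset[OF dB] Bij_imp_extensional[OF dB]
      by simp
    finally show ?thesis
      using True generate.eng[OF generate.incl lift_False, of "beta n"] by simp
  qed (use lift_False in simp)
qed

lemma Cnk_normal_form:
  assumes \<sigma>: "\<sigma> \<in> Cnk n k"
  obtains a r b where
    "\<sigma> = lift_map n (dihedral_map n a r) b
      \<or> (n = 4 * k \<and> \<sigma> = lift_map n (dihedral_map n a r) b \<otimes>\<^bsub>SymV n\<^esub> theta n k)"
proof -
  interpret SymV: group "SymV n"
    by (rule group_BijGroup)
  obtain a b where \<sigma>0: "\<sigma> (U, 0, False) = (U, a, b)" and a: "a < n"
    using Cnk_U_side[OF \<sigma> n_pos] by blast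
  have "{(U, 0, False), (U, 1, True)} \<in> circulant_edges n U 1"
    using circulant_edge_memI[of 0 n 1 1 U False] n_ge_6 by simp
  then have "{(U, a, b), \<sigma> (U, 1, True)} \<in> circulant_edges n U 1"
    using Cnk_edge_iff(1)[OF \<sigma>, of "(U, 0, False)" "(U, 1, True)"] \<sigma>0 n_ge_6 by simp
  then have \<sigma>1: "\<sigma> (U, 1, True) = (U, (a + 1) mod n, \<not> b) \<or> \<sigma> (U, 1, True) = (U, (a + (n - 1)) mod n, \<not> b)"
    using circulant_edge_iff[OF a, of 1 U b] n_pos by simp
  define r where "r = (\<sigma> (U, 1, True) \<noteq> (U, (a + 1) mod n, \<not> b))"
  define g where "g = lift_map n (dihedral_map n a r) b"
  have g: "g \<in> Cnk n k"
    by (simp add: g_def lift_dihedral_mem_Cnk)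
  then have g_carrier: "g \<in> carrier (SymV n)"
    using Cnk_Bij by (simp add: carrier_BijGroup)
  have \<sigma>_carrier: "\<sigma> \<in> carrier (SymV n)"
    using Cnk_Bij[OF \<sigma>] by (simp add: carrier_BijGroup)
  have g0: "g (U, 0, False) = \<sigma> (U, 0, False)"
    using \<sigma>0 a n_pos by (simp add: g_def dihedral_map_apply)
  have g1: "g (U, 1, True) = \<sigma> (U, 1, True)"
    using \<sigma>1 n_ge_6 by (cases r) (auto simp: g_def r_def dihedral_map_apply add.commute)
  define \<tau> where "\<tau> = inv\<^bsub>SymV n\<^esub> g \<otimes>\<^bsub>SymV n\<^esub> \<sigma>"
  have \<tau>: "\<tau> \<in> Cnk n k"
    unfolding \<tau>_def
    using subgroup.m_closed[OF subgroup_Cnk subgroup.m_inv_closed[OF subgroup_Cnk g] \<sigma>] .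
  have \<tau>_fixes: "\<tau> x = x" if "x \<in> verts n" and "g x = \<sigma> x" for x
    unfolding \<tau>_def using BijGroup_inv_mult_apply g_carrier \<sigma>_carrier that
    by (simp add: carrier_BijGroup)
  have "\<sigma> = g \<otimes>\<^bsub>SymV n\<^esub> \<tau>"
    using g_carrier \<sigma>_carrier by (simp add: \<tau>_def SymV.m_assoc[symmetric])
  moreover have "\<tau> = \<one>\<^bsub>SymV n\<^esub> \<or> (n = 4 * k \<and> \<tau> = theta n k)"
    using Cnk_rigid[OF \<tau>] \<tau>_fixes g0 g1 n_ge_6 by simp
  ultimately have "\<sigma> = g \<or> (n = 4 * k \<and> \<sigma> = g \<otimes>\<^bsub>SymV n\<^esub> theta n k)"
    using g_carrier by auto
  then show ?thesis
    using that unfolding g_def by blast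
qed

lemma Cnk_eq_generate:
  assumes "n \<noteq> 4 * k"
  shows "Cnk n k = generate (SymV n) {rho n, delta n, beta n}"
proof
  show "Cnk n k \<subseteq> generate (SymV n) {rho n, delta n, beta n}"
  proof
    fix \<sigma> assume "\<sigma> \<in> Cnk n k"
    then obtain a r b where "\<sigma> = lift_map n (dihedral_map n a r) b"
      using Cnk_normal_form assms by blast
    then show "\<sigma> \<in> generate (SymV n) {rho n, delta n, beta n}"
      using lift_map_mem_generate[OF dihedral_map_mem_dihedral] by simp
  qed
qed (rule generate_subset_Cnk)

lemma Cnk_eq_generate_theta:
  assumes n4: "n = 4 * k"
  shows "Cnk n k = generate (SymV n) {rho n, delta n, beta n, theta n k}"
proof
  let ?G = "generate (SymV n) {rho n, delta n, beta n, theta n k}"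
  show "Cnk n k \<subseteq> ?G"
  proof
    fix \<sigma> assume "\<sigma> \<in> Cnk n k"
    then obtain a r b where \<sigma>: "\<sigma> = lift_map n (dihedral_map n a r) b
        \<or> \<sigma> = lift_map n (dihedral_map n a r) b \<otimes>\<^bsub>SymV n\<^esub> theta n k"
      using Cnk_normal_form by blast
    have "lift_map n (dihedral_map n a r) b \<in> ?G"
      using lift_map_mem_generate[OF dihedral_map_mem_dihedral]
        group.mono_generate[OF group_BijGroup, of "{rho n, delta n, beta n}"] by blast
    with \<sigma> show "\<sigma> \<in> ?G"
      by (auto intro: generate.eng generate.incl)
  qed
qed (rule generate_theta_subset_Cnk[OF n4])

lemma carrier_Z2: "carrier (integer_mod_group 2) = {0, 1}"
  by (auto simp: carrier_integer_mod_group)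

lemma lift_pair_mem_Cnk:
  "x \<in> carrier (DirProd (dihedral n) (integer_mod_group 2)) \<Longrightarrow> lift_pair n x \<in> Cnk n k"
  using lift_map_mem_generate generate_subset_Cnk by (auto simp: lift_pair_def)

lemma lift_pair_hom:
  "lift_pair n \<in> hom (DirProd (dihedral n) (integer_mod_group 2)) ((SymV n)\<lparr>carrier := Cnk n k\<rparr>)"
proof (rule homI)
  let ?P = "DirProd (dihedral n) (integer_mod_group 2)"
  fix x y assume "x \<in> carrier ?P" and "y \<in> carrier ?P"
  then obtain d1 z1 d2 z2 where x: "x = (d1, z1)" "d1 \<in> carrier (dihedral n)" "z1 \<in> {0, 1}"
    and y: "y = (d2, z2)" "d2 \<in> carrier (dihedral n)" "z2 \<in> {0, 1}"
    by (auto simp: carrier_Z2)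
  have d: "d1 \<in> Bij {..<n}" "d2 \<in> Bij {..<n}"
    using x(2) y(2) carrier_dihedral_subset_Bij by blast+
  have "lift_pair n (x \<otimes>\<^bsub>?P\<^esub> y) = lift_map n (compose {..<n} d1 d2) ((z1 = 1) \<noteq> (z2 = 1))"
    using x y d by (auto simp: lift_pair_def dihedral_def BijGroup_def)
  also have "\<dots> = lift_pair n x \<otimes>\<^bsub>SymV n\<^esub> lift_pair n y"
    using lift_map_compose[OF Bij_imp_funcset[OF d(2)]] lift_map_Bij[OF d(1)] lift_map_Bij[OF d(2)] x y
    by (simp add: lift_pair_def BijGroup_def)
  finally show "lift_pair n (x \<otimes>\<^bsub>?P\<^esub> y) = lift_pair n x \<otimes>\<^bsub>(SymV n)\<lparr>carrier := Cnk n k\<rparr>\<^esub> lift_pair n y"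
    by simp
qed (simp add: lift_pair_mem_Cnk)

lemma inj_on_lift_pair: "inj_on (lift_pair n) (carrier (DirProd (dihedral n) (integer_mod_group 2)))"
proof (rule inj_onI)
  fix x y
  assume "x \<in> carrier (DirProd (dihedral n) (integer_mod_group 2))"
    and "y \<in> carrier (DirProd (dihedral n) (integer_mod_group 2))" and eq: "lift_pair n x = lift_pair n y"
  then obtain d1 z1 d2 z2 where x: "x = (d1, z1)" "d1 \<in> carrier (dihedral n)" "z1 \<in> {0, 1}"
    and y: "y = (d2, z2)" "d2 \<in> carrier (dihedral n)" "z2 \<in> {0, 1}"
    by (auto simp: carrier_Z2)
  then have "d1 \<in> extensional {..<n}" "d2 \<in> extensional {..<n}"
    using carrier_dihedral_subset_Bij Bij_imp_extensional by blast+
  with eq x y show "x = y"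
    using lift_map_eq_iff[OF n_pos] by (auto simp: lift_pair_def)
qed

lemma lift_pair_image:
  assumes "n \<noteq> 4 * k"
  shows "lift_pair n ` carrier (DirProd (dihedral n) (integer_mod_group 2)) = Cnk n k"
proof
  show "Cnk n k \<subseteq> lift_pair n ` carrier (DirProd (dihedral n) (integer_mod_group 2))"
  proof
    fix \<sigma> assume "\<sigma> \<in> Cnk n k"
    then obtain a r b where "\<sigma> = lift_map n (dihedral_map n a r) b"
      using Cnk_normal_form assms by blast
    then have "\<sigma> = lift_pair n (dihedral_map n a r, if b then 1 else 0)"
      by (simp add: lift_pair_def)
    then show "\<sigma> \<in> lift_pair n ` carrier (DirProd (dihedral n) (integer_mod_group 2))"
      using dihedral_map_mem_dihedral by (auto simp: carrier_Z2)
  qed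
qed (use lift_pair_mem_Cnk in blast)

lemma Cnk_iso_dihedral_times_Z2:
  assumes "n \<noteq> 4 * k"
  shows "(SymV n)\<lparr>carrier := Cnk n k\<rparr> \<cong> DirProd (dihedral n) (integer_mod_group 2)"
proof -
  have "lift_pair n \<in> iso (DirProd (dihedral n) (integer_mod_group 2)) ((SymV n)\<lparr>carrier := Cnk n k\<rparr>)"
    using lift_pair_hom inj_on_lift_pair lift_pair_image[OF assms] by (simp add: iso_def bij_betw_def)
  then show ?thesis
    using group.iso_sym[OF DirProd_group[OF group_dihedral group_integer_mod_group]] is_isoI by blast
qed

end

theorem proposition5p2:
  fixes n k :: nat
  assumes "even n" and "even k" and "1 \<le> k" and "2 * k < n"
  shows "(n \<noteq> 4 * k \<longrightarrow>
            Cnk n k = generate (SymV n) {rho n, delta n, beta n} \<and>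
            (SymV n)\<lparr>carrier := Cnk n k\<rparr> \<cong> DirProd (dihedral n) (integer_mod_group 2))
       \<and> (n = 4 * k \<longrightarrow>
            Cnk n k = generate (SymV n) {rho n, delta n, beta n, theta n k})"
proof -
  interpret even_dgp n k
    using assms by unfold_locales
  show ?thesis
    using Cnk_eq_generate Cnk_iso_dihedral_times_Z2 Cnk_eq_generate_theta by blast
qed

end
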